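(* Let $r\ge 1$ and $n\ge 3r+6$ be integers. Then $\rho(H_{n,r})\ge \rho(H'_{n,r})$, with equality if and only if $n=3r+6$.
   Context: $\rho$ denotes the spectral radius (largest adjacency eigenvalue). $K_1\vee rK_3$ is the join of a single vertex with $r$ disjoint triangles; let $u$ be its vertex of degree $3r$ (any vertex if $r=1$). In $K_{3,n-3r-3}$ (complete bipartite with parts of sizes $3$ and $n-3r-3$), let $vw$ be an edge where $v$ has degree $n-3r-3$ and $w$ has degree $3$. $H_{n,r}$ is the graph obtained from the disjoint union of $K_1\vee rK_3$ and $K_{3,n-3r-3}$ by identifying $u$ with $v$, and $H'_{n,r}$ is obtained by identifying $u$ with $w$. *)

theory Defs
  imports "Jordan_Normal_Form.Spectral_Radius"
begin

(* Simple graphs on vertex set {0..<n}, given by a symmetric irreflexive edge predicate. *)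

definition adj_matrix :: "nat \<Rightarrow> (nat \<Rightarrow> nat \<Rightarrow> bool) \<Rightarrow> complex mat" where
  "adj_matrix n E = mat n n (\<lambda>(i,j). if E i j then 1 else 0)"

definition graph_rho :: "nat \<Rightarrow> (nat \<Rightarrow> nat \<Rightarrow> bool) \<Rightarrow> real" where
  "graph_rho n E = spectral_radius (adj_matrix n E)"

(* K_1 v rK_3 on vertices {0..3r}: vertex 0 is u, triangles {3k+1,3k+2,3k+3}, k<r *)
definition fan_edge :: "nat \<Rightarrow> nat \<Rightarrow> nat \<Rightarrow> bool" where
  "fan_edge r i j \<longleftrightarrow> i \<noteq> j \<and>
     ((i = 0 \<and> 1 \<le> j \<and> j \<le> 3*r) \<or> (j = 0 \<and> 1 \<le> i \<and> i \<le> 3*r) \<or>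
      (1 \<le> i \<and> i \<le> 3*r \<and> 1 \<le> j \<and> j \<le> 3*r \<and> (i - 1) div 3 = (j - 1) div 3))"

definition bip_edge :: "nat set \<Rightarrow> nat set \<Rightarrow> nat \<Rightarrow> nat \<Rightarrow> bool" where
  "bip_edge A B i j \<longleftrightarrow> (i \<in> A \<and> j \<in> B) \<or> (i \<in> B \<and> j \<in> A)"

(* H_{n,r}: u identified with v, a vertex of the 3-part (degree n-3r-3).
   3-part = {0, 3r+1, 3r+2}, other part = {3r+3..<n} (size n-3r-3). *)
definition H_edge :: "nat \<Rightarrow> nat \<Rightarrow> nat \<Rightarrow> nat \<Rightarrow> bool" where
  "H_edge n r i j \<longleftrightarrow> fan_edge r i j \<or> bip_edge {0, 3*r+1, 3*r+2} {3*r+3..<n} i j"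

(* H'_{n,r}: u identified with w, a vertex of the (n-3r-3)-part (degree 3).
   3-part = {3r+1, 3r+2, 3r+3}, other part = {0} \<union> {3r+4..<n} (size n-3r-3). *)
definition H'_edge :: "nat \<Rightarrow> nat \<Rightarrow> nat \<Rightarrow> nat \<Rightarrow> bool" where
  "H'_edge n r i j \<longleftrightarrow> fan_edge r i j \<or> bip_edge {3*r+1, 3*r+2, 3*r+3} ({0} \<union> {3*r+4..<n}) i j"

end

(* Let m = n - 3r - 3 and let mu > sqrt (3m) be a root of the characteristic polynomial of the
   quotient matrix of H_{n,r}. Lifting its eigenvector gives a positive eigenvector of H_{n,r}, so
   rho(H_{n,r}) = mu. On H'_{n,r} keep the weights of u and of the triangles and choose the weights
   of the bipartite part so that every eigen-equation except the one at u holds; at u the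
   neighbour sum falls short of mu by mu (m - 3)(mu^2 - 3m) / ((mu^2 - 2m)(mu^2 - 3m + 3)) >= 0.
   The Collatz-Wielandt bound then gives rho(H'_{n,r}) <= mu, strictly when m > 3 because
   H'_{n,r} is connected, while for m = 3 the vector is an exact eigenvector. *)

theory Submission
  imports Defs
begin

definition nbr_sum :: "nat \<Rightarrow> (nat \<Rightarrow> nat \<Rightarrow> bool) \<Rightarrow> (nat \<Rightarrow> 'a::comm_monoid_add) \<Rightarrow> nat \<Rightarrow> 'a" where
  "nbr_sum n E f i = (\<Sum>j | j < n \<and> E i j. f j)"

definition nbr_closed :: "nat \<Rightarrow> (nat \<Rightarrow> nat \<Rightarrow> bool) \<Rightarrow> nat set \<Rightarrow> bool" where
  "nbr_closed n E S \<longleftrightarrow> S \<subseteq> {..<n} \<and> (\<forall>i\<in>S. \<forall>j<n. E i j \<longrightarrow> j \<in> S)"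

lemma nbr_sum_mono:
  fixes f g :: "nat \<Rightarrow> 'a::ordered_comm_monoid_add"
  assumes "\<And>j. j < n \<Longrightarrow> f j \<le> g j"
  shows "nbr_sum n E f i \<le> nbr_sum n E g i"
  unfolding nbr_sum_def using assms by (intro sum_mono) auto

lemma nbr_sum_cong: "(\<And>j. j < n \<Longrightarrow> f j = g j) \<Longrightarrow> nbr_sum n E f i = nbr_sum n E g i"
  unfolding nbr_sum_def by (rule sum.cong) auto

lemma nbr_sum_cmult:
  fixes f :: "nat \<Rightarrow> 'a::semiring_0"
  shows "nbr_sum n E (\<lambda>j. c * f j) i = c * nbr_sum n E f i"
  by (simp add: nbr_sum_def sum_distrib_left)

lemma norm_nbr_sum_le: "norm (nbr_sum n E f i) \<le> nbr_sum n E (\<lambda>j. norm (f j)) i"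
  unfolding nbr_sum_def by (rule norm_sum)

lemma nbr_sum_mono_eq_imp_eq:
  fixes f g :: "nat \<Rightarrow> real"
  assumes le: "\<And>j. j < n \<Longrightarrow> f j \<le> g j" and eq: "nbr_sum n E f i = nbr_sum n E g i"
    and "j < n" "E i j"
  shows "f j = g j"
proof -
  have "(\<Sum>k | k < n \<and> E i k. g k - f k) = 0"
    using eq by (simp add: nbr_sum_def sum_subtractf)
  then have "\<forall>k \<in> {k. k < n \<and> E i k}. g k - f k = 0"
    using le by (subst (asm) sum_nonneg_eq_0_iff) auto
  with \<open>j < n\<close> \<open>E i j\<close> show ?thesis by auto
qed

lemma index_adj_matrix_mult_vec:
  assumes "i < n" "v \<in> carrier_vec n"
  shows "(adj_matrix n E *\<^sub>v v) $ i = nbr_sum n E (\<lambda>j. v $ j) i"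
proof -
  have "(adj_matrix n E *\<^sub>v v) $ i = (\<Sum>j\<in>{0..<n}. if E i j then v $ j else 0)"
    using assms by (auto simp: adj_matrix_def mult_mat_vec_def scalar_prod_def intro!: sum.cong)
  also have "\<dots> = nbr_sum n E (\<lambda>j. v $ j) i"
    by (simp add: nbr_sum_def sum.inter_filter[symmetric] atLeast0LessThan)
  finally show ?thesis .
qed

lemma mem_spectrum_adj_matrix_iff:
  "l \<in> spectrum (adj_matrix n E) \<longleftrightarrow>
     (\<exists>v. (\<exists>i<n. v i \<noteq> 0) \<and> (\<forall>i<n. nbr_sum n E v i = l * v i))"
proof
  assume "l \<in> spectrum (adj_matrix n E)"
  then obtain v where "eigenvector (adj_matrix n E) v l"
    unfolding spectrum_def eigenvalue_def by auto
  then have v: "v \<in> carrier_vec n" "v \<noteq> 0\<^sub>v n" "adj_matrix n E *\<^sub>v v = l \<cdot>\<^sub>v v"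
    unfolding eigenvector_def by (auto simp: adj_matrix_def)
  have "\<exists>i<n. v $ i \<noteq> 0"
    using v(1,2) by (auto intro!: eq_vecI)
  moreover have "nbr_sum n E (\<lambda>j. v $ j) i = l * v $ i" if "i < n" for i
    using v index_adj_matrix_mult_vec[OF that v(1), of E] that by (metis index_smult_vec(1) carrier_vecD)
  ultimately show "\<exists>v. (\<exists>i<n. v i \<noteq> 0) \<and> (\<forall>i<n. nbr_sum n E v i = l * v i)"
    by blast
next
  assume "\<exists>v. (\<exists>i<n. v i \<noteq> 0) \<and> (\<forall>i<n. nbr_sum n E v i = l * v i)"
  then obtain v where v: "\<exists>i<n. v i \<noteq> 0" "\<forall>i<n. nbr_sum n E v i = l * v i"
    by blast
  have "(adj_matrix n E *\<^sub>v vec n v) $ i = l * v i" if "i < n" for i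
  proof -
    have "(adj_matrix n E *\<^sub>v vec n v) $ i = nbr_sum n E (\<lambda>j. vec n v $ j) i"
      using that by (simp add: index_adj_matrix_mult_vec)
    also have "\<dots> = nbr_sum n E v i"
      by (rule nbr_sum_cong) simp
    finally show ?thesis
      using v(2) that by simp
  qed
  then have "adj_matrix n E *\<^sub>v vec n v = l \<cdot>\<^sub>v vec n v"
    by (intro eq_vecI) (auto simp: adj_matrix_def)
  moreover have "vec n v \<noteq> 0\<^sub>v n"
    using v(1) by (auto simp: vec_eq_iff)
  ultimately have "eigenvector (adj_matrix n E) (vec n v) l"
    unfolding eigenvector_def by (simp add: adj_matrix_def)
  then show "l \<in> spectrum (adj_matrix n E)"
    unfolding spectrum_def eigenvalue_def by auto
qed

lemma max_norm_ratio:
  fixes v :: "nat \<Rightarrow> 'a::real_normed_vector" and w :: "nat \<Rightarrow> real"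
  assumes "\<exists>i<n. v i \<noteq> 0" and "\<forall>i<n. 0 < w i"
  obtains t where "0 < t" "\<forall>j<n. norm (v j) \<le> t * w j" "\<exists>i<n. norm (v i) = t * w i"
proof -
  define q where "q j = norm (v j) / w j" for j
  obtain i where i: "i < n" "v i \<noteq> 0"
    using assms(1) by blast
  define t where "t = Max (q ` {..<n})"
  have q_le: "q j \<le> t" if "j < n" for j
    unfolding t_def using that by simp
  have "t \<in> q ` {..<n}"
    unfolding t_def using i(1) by (intro Max_in) auto
  then obtain i1 where "i1 < n" "q i1 = t"
    by auto
  moreover have "0 < t"
    using i assms(2) q_le[OF i(1)] unfolding q_def by (smt (verit) divide_pos_pos zero_less_norm_iff)
  moreover have "norm (v j) \<le> t * w j" if "j < n" for j
    using q_le[OF that] assms(2) that by (simp add: q_def pos_divide_le_eq)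
  moreover have "norm (v i1) = t * w i1"
    using \<open>q i1 = t\<close> \<open>i1 < n\<close> assms(2) by (auto simp: q_def field_simps)
  ultimately show ?thesis
    using that by blast
qed

lemma norm_eigenvector_le_nbr_sum:
  fixes v :: "nat \<Rightarrow> 'a::real_normed_div_algebra"
  assumes "\<forall>i<n. nbr_sum n E v i = l * v i" "i < n"
  shows "norm l * norm (v i) \<le> nbr_sum n E (\<lambda>j. norm (v j)) i"
  using assms norm_nbr_sum_le[of n E v i] by (simp add: norm_mult)

lemma eigenvalue_norm_le_subeigenvalue:
  fixes v :: "nat \<Rightarrow> 'a::real_normed_div_algebra" and w :: "nat \<Rightarrow> real"
  assumes v: "\<exists>i<n. v i \<noteq> 0" "\<forall>i<n. nbr_sum n E v i = l * v i"
    and w: "\<forall>i<n. 0 < w i" "\<forall>i<n. nbr_sum n E w i \<le> \<mu> * w i"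
  shows "norm l \<le> \<mu>"
proof -
  obtain t where t: "0 < t" "\<forall>j<n. norm (v j) \<le> t * w j" and "\<exists>i<n. norm (v i) = t * w i"
    using max_norm_ratio[OF v(1) w(1)] by blast
  then obtain i where i: "i < n" "norm (v i) = t * w i"
    by blast
  have "norm l * (t * w i) \<le> nbr_sum n E (\<lambda>j. norm (v j)) i"
    using norm_eigenvector_le_nbr_sum[OF v(2) i(1)] i(2) by simp
  also have "\<dots> \<le> t * nbr_sum n E w i"
    using t(2) by (auto simp: nbr_sum_cmult[symmetric] intro: nbr_sum_mono)
  also have "\<dots> \<le> \<mu> * (t * w i)"
    using w(2) i(1) t(1) by (simp add: mult_left_mono mult.left_commute)
  finally show ?thesis
    using t(1) w(1) i(1) by simp
qed

lemma tight_at_max_norm_ratio: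
  fixes v :: "nat \<Rightarrow> 'a::real_normed_div_algebra" and w :: "nat \<Rightarrow> real"
  assumes v: "\<forall>i<n. nbr_sum n E v i = l * v i" and w: "\<forall>i<n. nbr_sum n E w i \<le> \<mu> * w i"
    and t: "0 < t" "\<forall>j<n. norm (v j) \<le> t * w j"
    and l: "\<mu> \<le> norm l" and i: "i < n" "norm (v i) = t * w i"
  shows "nbr_sum n E (\<lambda>j. norm (v j)) i = nbr_sum n E (\<lambda>j. t * w j) i"
    and "nbr_sum n E w i = \<mu> * w i"
proof -
  have "0 \<le> t * w i"
    using i(2) by (metis norm_ge_zero)
  then have "\<mu> * (t * w i) \<le> norm l * (t * w i)"
    using l by (rule mult_right_mono[rotated])
  also have "\<dots> \<le> nbr_sum n E (\<lambda>j. norm (v j)) i"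
    using norm_eigenvector_le_nbr_sum[OF v i(1)] i(2) by simp
  finally have lower: "\<mu> * (t * w i) \<le> nbr_sum n E (\<lambda>j. norm (v j)) i" .
  have middle: "nbr_sum n E (\<lambda>j. norm (v j)) i \<le> nbr_sum n E (\<lambda>j. t * w j) i"
    using t(2) by (auto intro: nbr_sum_mono)
  have scaled: "nbr_sum n E (\<lambda>j. t * w j) i = t * nbr_sum n E w i"
    by (rule nbr_sum_cmult)
  have upper: "t * nbr_sum n E w i \<le> t * (\<mu> * w i)"
    using w i(1) t(1) by (simp add: mult_left_mono)
  have comm: "\<mu> * (t * w i) = t * (\<mu> * w i)"
    by simp
  show "nbr_sum n E (\<lambda>j. norm (v j)) i = nbr_sum n E (\<lambda>j. t * w j) i"
    using lower middle scaled upper comm by linarith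
  have "t * nbr_sum n E w i = t * (\<mu> * w i)"
    using lower middle scaled upper comm by linarith
  then show "nbr_sum n E w i = \<mu> * w i"
    using t(1) by simp
qed

(* If norm l = mu, the vertices where norm v / w is maximal form a nonempty closed set
   on which w satisfies the eigen-equation exactly, so it cannot contain i0. *)
lemma eigenvalue_norm_less_subeigenvalue:
  fixes v :: "nat \<Rightarrow> 'a::real_normed_div_algebra" and w :: "nat \<Rightarrow> real"
  assumes v: "\<exists>i<n. v i \<noteq> 0" "\<forall>i<n. nbr_sum n E v i = l * v i"
    and w: "\<forall>i<n. 0 < w i" "\<forall>i<n. nbr_sum n E w i \<le> \<mu> * w i"
    and strict: "nbr_sum n E w i0 < \<mu> * w i0"
    and reach: "\<forall>S. nbr_closed n E S \<and> S \<noteq> {} \<longrightarrow> i0 \<in> S"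
  shows "norm l < \<mu>"
proof (rule ccontr)
  assume "\<not> norm l < \<mu>"
  then have l: "\<mu> \<le> norm l" by simp
  obtain t where t: "0 < t" "\<forall>j<n. norm (v j) \<le> t * w j" "\<exists>i<n. norm (v i) = t * w i"
    using max_norm_ratio[OF v(1) w(1)] by blast
  define S where "S = {i. i < n \<and> norm (v i) = t * w i}"
  note tight = tight_at_max_norm_ratio[OF v(2) w(2) t(1,2) l]
  have "nbr_closed n E S"
    unfolding nbr_closed_def
  proof (intro conjI ballI allI impI)
    fix i j assume ij: "i \<in> S" "j < n" "E i j"
    have "\<And>j. j < n \<Longrightarrow> norm (v j) \<le> t * w j"
      using t(2) by blast
    moreover have "nbr_sum n E (\<lambda>j. norm (v j)) i = nbr_sum n E (\<lambda>j. t * w j) i"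
      using tight(1) ij(1) by (simp add: S_def)
    ultimately have "norm (v j) = t * w j"
      using ij(2,3) by (rule nbr_sum_mono_eq_imp_eq)
    then show "j \<in> S"
      using ij(2) by (simp add: S_def)
  qed (auto simp: S_def)
  moreover have "S \<noteq> {}"
    using t(3) by (auto simp: S_def)
  ultimately have "i0 \<in> S"
    using reach by blast
  with tight(2) strict show False
    by (simp add: S_def)
qed

lemma graph_rho_attained:
  assumes "0 < n"
  obtains l :: complex and v where "graph_rho n E = norm l" "\<exists>i<n. v i \<noteq> 0" "\<forall>i<n. nbr_sum n E v i = l * v i"
proof -
  have "adj_matrix n E \<in> carrier_mat n n"
    by (simp add: adj_matrix_def)
  from spectral_radius_mem_max(1)[OF this assms] obtain l
    where l: "l \<in> spectrum (adj_matrix n E)" "graph_rho n E = norm l"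
    unfolding graph_rho_def by auto
  from l(1) obtain v where "\<exists>i<n. v i \<noteq> 0" "\<forall>i<n. nbr_sum n E v i = l * v i"
    unfolding mem_spectrum_adj_matrix_iff by blast
  with l(2) show ?thesis
    by (rule that)
qed

lemma graph_rho_le_subeigenvalue:
  fixes w :: "nat \<Rightarrow> real"
  assumes "0 < n" "\<forall>i<n. 0 < w i" "\<forall>i<n. nbr_sum n E w i \<le> \<mu> * w i"
  shows "graph_rho n E \<le> \<mu>"
proof -
  obtain l :: complex and v where "graph_rho n E = norm l" and v: "\<exists>i<n. v i \<noteq> 0" "\<forall>i<n. nbr_sum n E v i = l * v i"
    using graph_rho_attained[OF assms(1)] .
  with eigenvalue_norm_le_subeigenvalue[OF v assms(2,3)] show ?thesis
    by simp
qed

lemma graph_rho_less_subeigenvalue: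
  fixes w :: "nat \<Rightarrow> real"
  assumes "0 < n" "\<forall>i<n. 0 < w i" "\<forall>i<n. nbr_sum n E w i \<le> \<mu> * w i"
    and "nbr_sum n E w i0 < \<mu> * w i0" "\<forall>S. nbr_closed n E S \<and> S \<noteq> {} \<longrightarrow> i0 \<in> S"
  shows "graph_rho n E < \<mu>"
proof -
  obtain l :: complex and v where "graph_rho n E = norm l" and v: "\<exists>i<n. v i \<noteq> 0" "\<forall>i<n. nbr_sum n E v i = l * v i"
    using graph_rho_attained[OF assms(1)] .
  with eigenvalue_norm_less_subeigenvalue[OF v assms(2-5)] show ?thesis
    by simp
qed

lemma abs_eigenvalue_le_graph_rho:
  fixes w :: "nat \<Rightarrow> real"
  assumes "0 < n" "\<exists>i<n. w i \<noteq> 0" "\<forall>i<n. nbr_sum n E w i = \<mu> * w i"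
  shows "\<bar>\<mu>\<bar> \<le> graph_rho n E"
proof -
  have "nbr_sum n E (\<lambda>j. complex_of_real (w j)) i = complex_of_real \<mu> * complex_of_real (w i)"
    if "i < n" for i
    using assms(3) that by (simp add: nbr_sum_def flip: of_real_sum)
  then have "complex_of_real \<mu> \<in> spectrum (adj_matrix n E)"
    unfolding mem_spectrum_adj_matrix_iff using assms(2)
    by (intro exI[of _ "\<lambda>j. complex_of_real (w j)"]) auto
  moreover have "adj_matrix n E \<in> carrier_mat n n"
    by (simp add: adj_matrix_def)
  ultimately have "norm (complex_of_real \<mu>) \<le> spectral_radius (adj_matrix n E)"
    using assms(1) by (intro spectral_radius_mem_max(2) imageI)
  then show ?thesis
    by (simp add: graph_rho_def)
qed

lemma graph_rho_eq_positive_eigenvalue: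
  fixes w :: "nat \<Rightarrow> real"
  assumes "0 < n" "\<forall>i<n. 0 < w i" "\<forall>i<n. nbr_sum n E w i = \<mu> * w i"
  shows "graph_rho n E = \<mu>"
proof -
  have "\<exists>i<n. w i \<noteq> 0"
    using assms(1,2) by fastforce
  then have "\<bar>\<mu>\<bar> \<le> graph_rho n E"
    using abs_eigenvalue_le_graph_rho[OF assms(1) _ assms(3)] by blast
  moreover have "graph_rho n E \<le> \<mu>"
    using graph_rho_le_subeigenvalue[OF assms(1,2)] assms(3) by simp
  ultimately show ?thesis by linarith
qed

lemma sum_constant_on:
  assumes "\<And>j. j \<in> A \<Longrightarrow> f j = c"
  shows "sum f A = of_nat (card A) * c"
  using assms by simp

lemma fan_edge_nbrs:
  assumes "1 \<le> i" "i \<le> 3*r"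
  defines "k \<equiv> (i - 1) div 3"
  shows "{j. fan_edge r i j} = insert 0 ({3*k+1..3*k+3} - {i})"
    and "i \<in> {3*k+1..3*k+3}" "3*k+3 \<le> 3*r"
proof -
  have block: "1 \<le> j \<and> (j - 1) div 3 = k \<longleftrightarrow> j \<in> {3*k+1..3*k+3}" for j k :: nat
    by auto
  show i: "i \<in> {3*k+1..3*k+3}"
    using block[of i k] assms(1) by (simp add: k_def)
  then show "3*k+3 \<le> 3*r"
    using assms(2) by simp presburger
  have nbr: "fan_edge r i j \<longleftrightarrow> j \<in> insert 0 ({3*k+1..3*k+3} - {i})" for j
  proof -
    have "fan_edge r i j \<longleftrightarrow> j = 0 \<or> (j \<noteq> i \<and> j \<le> 3*r \<and> (1 \<le> j \<and> (j - 1) div 3 = k))"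
      using assms(1,2) unfolding fan_edge_def k_def[symmetric] by auto
    also have "\<dots> \<longleftrightarrow> j = 0 \<or> (j \<noteq> i \<and> j \<le> 3*r \<and> j \<in> {3*k+1..3*k+3})"
      by (simp only: block)
    also have "\<dots> \<longleftrightarrow> j \<in> insert 0 ({3*k+1..3*k+3} - {i})"
      using \<open>3*k+3 \<le> 3*r\<close> by auto
    finally show ?thesis .
  qed
  show "{j. fan_edge r i j} = insert 0 ({3*k+1..3*k+3} - {i})"
    using nbr by (simp add: set_eq_iff)
qed

definition class_weight :: "nat \<Rightarrow> nat \<Rightarrow> real \<Rightarrow> real \<Rightarrow> real \<Rightarrow> real \<Rightarrow> nat \<Rightarrow> real" where
  "class_weight s r a b c d j =
     (if j = 0 then a else if j \<le> 3*r then b else if j \<le> 3*r + s then c else d)"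

lemma sum_class_weight_fan:
  assumes "1 \<le> i" "i \<le> 3*r"
  shows "sum (class_weight s r a b c d) {j. fan_edge r i j} = a + 2 * b"
proof -
  define k where "k = (i - 1) div 3"
  note nbrs = fan_edge_nbrs[OF assms, folded k_def]
  have "sum (class_weight s r a b c d) ({3*k+1..3*k+3} - {i}) = (\<Sum>j\<in>{3*k+1..3*k+3} - {i}. b)"
    using nbrs(3) by (intro sum.cong) (auto simp: class_weight_def)
  moreover have "card ({3*k+1..3*k+3} - {i}) = 2"
    using nbrs(2) by simp
  ultimately show ?thesis
    unfolding nbrs(1) by (simp add: class_weight_def)
qed

lemma H_edge_nbrs:
  assumes "3*r + 3 \<le> n" "i < n"
  shows "{j. j < n \<and> H_edge n r i j} =
    (if i = 0 then {1..3*r} \<union> {3*r+3..<n}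
     else if i \<le> 3*r then {j. fan_edge r i j}
     else if i \<le> 3*r + 2 then {3*r+3..<n}
     else {0, 3*r+1, 3*r+2})"
proof -
  consider "i = 0" | "1 \<le> i" "i \<le> 3*r" | "3*r < i" "i \<le> 3*r + 2" | "3*r + 2 < i"
    by linarith
  then show ?thesis
    by cases (use assms in \<open>auto simp: H_edge_def fan_edge_def bip_edge_def\<close>)
qed

lemma H'_edge_nbrs:
  assumes "3*r + 4 \<le> n" "i < n"
  shows "{j. j < n \<and> H'_edge n r i j} =
    (if i = 0 then {1..3*r} \<union> {3*r+1..3*r+3}
     else if i \<le> 3*r then {j. fan_edge r i j}
     else if i \<le> 3*r + 3 then insert 0 {3*r+4..<n}
     else {3*r+1..3*r+3})"
proof -
  consider "i = 0" | "1 \<le> i" "i \<le> 3*r" | "3*r < i" "i \<le> 3*r + 3" | "3*r + 3 < i"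
    by linarith
  then show ?thesis
    by cases (use assms in \<open>auto simp: H'_edge_def fan_edge_def bip_edge_def\<close>)
qed

lemma nbr_sum_H_edge:
  assumes "3*r + 3 \<le> n" "i < n"
  defines "m \<equiv> real (n - 3*r - 3)"
  shows "nbr_sum n (H_edge n r) (class_weight 2 r a b c d) i =
    (if i = 0 then 3 * real r * b + m * d
     else if i \<le> 3*r then a + 2 * b
     else if i \<le> 3*r + 2 then m * d
     else a + 2 * c)"
proof -
  let ?w = "class_weight 2 r a b c d"
  have fan: "sum ?w {1..3*r} = 3 * real r * b"
    by (subst sum_constant_on[where c = b]) (auto simp: class_weight_def)
  have part: "sum ?w {3*r+3..<n} = m * d"
    using assms(1) by (subst sum_constant_on[where c = d]) (auto simp: class_weight_def m_def)
  have disj: "{1..3*r} \<inter> {3*r+3..<n} = {}"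
    by auto
  note nbrs = H_edge_nbrs[OF assms(1,2)]
  consider "i = 0" | "1 \<le> i" "i \<le> 3*r" | "3*r < i" "i \<le> 3*r + 2" | "3*r + 2 < i"
    by linarith
  then show ?thesis
  proof cases
    case 1
    with nbrs fan part disj show ?thesis
      by (simp add: nbr_sum_def sum.union_disjoint)
  next
    case 2
    with nbrs show ?thesis
      by (simp add: nbr_sum_def sum_class_weight_fan)
  next
    case 3
    with nbrs part show ?thesis
      by (simp add: nbr_sum_def)
  next
    case 4
    with nbrs show ?thesis
      by (simp add: nbr_sum_def class_weight_def)
  qed
qed

lemma nbr_sum_H'_edge:
  assumes "3*r + 4 \<le> n" "i < n"
  defines "m \<equiv> real (n - 3*r - 3)"
  shows "nbr_sum n (H'_edge n r) (class_weight 3 r a b c d) i =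
    (if i = 0 then 3 * real r * b + 3 * c
     else if i \<le> 3*r then a + 2 * b
     else if i \<le> 3*r + 3 then a + (m - 1) * d
     else 3 * c)"
proof -
  let ?w = "class_weight 3 r a b c d"
  have fan: "sum ?w {1..3*r} = 3 * real r * b"
    by (subst sum_constant_on[where c = b]) (auto simp: class_weight_def)
  have part3: "sum ?w {3*r+1..3*r+3} = 3 * c"
    by (subst sum_constant_on[where c = c]) (auto simp: class_weight_def)
  have part: "sum ?w {3*r+4..<n} = (m - 1) * d"
    using assms(1) by (subst sum_constant_on[where c = d]) (auto simp: class_weight_def m_def of_nat_diff)
  have disj: "{1..3*r} \<inter> {3*r+1..3*r+3} = {}"
    by auto
  note nbrs = H'_edge_nbrs[OF assms(1,2)]
  consider "i = 0" | "1 \<le> i" "i \<le> 3*r" | "3*r < i" "i \<le> 3*r + 3" | "3*r + 3 < i"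
    by linarith
  then show ?thesis
  proof cases
    case 1
    with nbrs fan part3 disj show ?thesis
      by (simp add: nbr_sum_def sum.union_disjoint)
  next
    case 2
    with nbrs show ?thesis
      by (simp add: nbr_sum_def sum_class_weight_fan)
  next
    case 3
    with nbrs part show ?thesis
      by (simp add: nbr_sum_def class_weight_def)
  next
    case 4
    with nbrs part3 show ?thesis
      by (simp add: nbr_sum_def)
  qed
qed

(* The characteristic polynomial of the quotient matrix of the equitable partition of H_{n,r}
   into u, the triangle vertices, the other two vertices of the 3-part, and the m-part. *)
definition H_quotient_charpoly :: "nat \<Rightarrow> real \<Rightarrow> real \<Rightarrow> real" where
  "H_quotient_charpoly r m x = x * (x - 2) * (x\<^sup>2 - 2*m) - 3 * real r * (x\<^sup>2 - 2*m) - m * x * (x - 2)"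

lemma H_quotient_charpoly_root:
  assumes "2 < \<mu>" "2*m < \<mu>\<^sup>2" "H_quotient_charpoly r m \<mu> = 0"
  shows "3 * real r * (1 / (\<mu> - 2)) + m * (\<mu> / (\<mu>\<^sup>2 - 2*m)) = \<mu>"
proof -
  have D: "\<mu> - 2 \<noteq> 0" "\<mu>\<^sup>2 - 2*m \<noteq> 0"
    using assms(1,2) by auto
  have num: "3 * real r * (\<mu>\<^sup>2 - 2*m) + m * \<mu> * (\<mu> - 2) = \<mu> * (\<mu> - 2) * (\<mu>\<^sup>2 - 2*m)"
    using assms(3) unfolding H_quotient_charpoly_def by linarith
  have "3 * real r * (1 / (\<mu> - 2)) + m * (\<mu> / (\<mu>\<^sup>2 - 2*m))
      = (3 * real r * (\<mu>\<^sup>2 - 2*m) + m * \<mu> * (\<mu> - 2)) / ((\<mu> - 2) * (\<mu>\<^sup>2 - 2*m))"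
    using D by (simp add: field_simps)
  also have "\<dots> = \<mu>"
    using D by (simp add: num)
  finally show ?thesis .
qed

lemma H_quotient_charpoly_sqrt:
  assumes "0 \<le> m"
  shows "H_quotient_charpoly r m (sqrt (3*m)) = - 3 * real r * m"
  using assms by (simp add: H_quotient_charpoly_def algebra_simps)

lemma H_quotient_charpoly_pos:
  assumes "0 \<le> m"
  shows "0 < H_quotient_charpoly r m (6 * real r + 4*m + 3)"
proof -
  define X where "X = 6 * real r + 4*m + 3"
  define y where "y = X * (X - 2)"
  have "X \<le> X\<^sup>2" "X \<le> y"
    using assms(1) by (auto simp: X_def y_def power2_eq_square algebra_simps)
  then have "2*m < X\<^sup>2 - 2*m" "y / 2 < y - 3 * real r"
    using assms(1) by (auto simp: X_def)
  then have "2*m * (y / 2) < (X\<^sup>2 - 2*m) * (y - 3 * real r)"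
    using assms(1) \<open>X \<le> y\<close> by (intro mult_strict_mono) (auto simp: X_def)
  moreover have "H_quotient_charpoly r m X = (X\<^sup>2 - 2*m) * (y - 3 * real r) - m * y"
    by (simp add: H_quotient_charpoly_def y_def algebra_simps)
  ultimately show ?thesis
    by (simp add: X_def)
qed

lemma H_quotient_charpoly_root_exists:
  assumes "1 \<le> r" "3 \<le> m"
  obtains \<mu> where "2 < \<mu>" "3*m < \<mu>\<^sup>2" "H_quotient_charpoly r m \<mu> = 0"
proof -
  let ?F = "H_quotient_charpoly r m"
  define x0 where "x0 = sqrt (3*m)"
  define X where "X = 6 * real r + 4*m + 3"
  have x0: "0 \<le> x0" "x0\<^sup>2 = 3*m"
    using assms(2) by (auto simp: x0_def)
  have F_x0: "?F x0 < 0"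
    using H_quotient_charpoly_sqrt[of m r] assms by (simp add: x0_def)
  have F_X: "0 < ?F X"
    using H_quotient_charpoly_pos[of m r] assms(2) by (simp add: X_def)
  have "x0 \<le> X"
    unfolding x0_def using assms by (intro real_le_lsqrt) (auto simp: X_def power2_eq_square algebra_simps)
  moreover have "\<forall>x. x0 \<le> x \<and> x \<le> X \<longrightarrow> isCont ?F x"
    unfolding H_quotient_charpoly_def[abs_def] by (auto intro!: continuous_intros)
  ultimately obtain \<mu> where \<mu>: "x0 \<le> \<mu>" "\<mu> \<le> X" "?F \<mu> = 0"
    using IVT[of ?F x0 0 X] F_x0 F_X by force
  have "x0 \<noteq> \<mu>"
    using F_x0 \<mu>(3) by auto
  with \<mu>(1) have "x0 < \<mu>"
    by simp
  then have "x0\<^sup>2 < \<mu>\<^sup>2"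
    using x0(1) by (intro power_strict_mono) auto
  then have "3*m < \<mu>\<^sup>2"
    using x0(2) by simp
  moreover have "2 < \<mu>"
  proof (rule power_less_imp_less_base)
    show "2 ^ 2 < \<mu> ^ 2"
      using \<open>3*m < \<mu>\<^sup>2\<close> assms(2) by simp
    show "0 \<le> \<mu>"
      using x0(1) \<open>x0 < \<mu>\<close> by simp
  qed
  ultimately show ?thesis
    using that[of \<mu>] \<mu>(3) by blast
qed

lemma graph_rho_H_edge:
  assumes "3*r + 4 \<le> n" "2 < \<mu>"
    and "2 * real (n - 3*r - 3) < \<mu>\<^sup>2" "H_quotient_charpoly r (n - 3*r - 3) \<mu> = 0"
  shows "graph_rho n (H_edge n r) = \<mu>"
proof -
  define m where "m = real (n - 3*r - 3)"
  define w where "w = class_weight 2 r 1 (1 / (\<mu> - 2)) (m / (\<mu>\<^sup>2 - 2*m)) (\<mu> / (\<mu>\<^sup>2 - 2*m))"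
  have m: "1 \<le> m" "2*m < \<mu>\<^sup>2"
    using assms(1,3) by (auto simp: m_def)
  have "\<forall>i<n. 0 < w i"
    using assms(2) m by (simp add: w_def class_weight_def)
  moreover have "nbr_sum n (H_edge n r) w i = \<mu> * w i" if "i < n" for i
  proof -
    have "3*r + 3 \<le> n"
      using assms(1) by simp
    note row = nbr_sum_H_edge[OF this that, folded m_def]
    have "1 + 2 * (1 / (\<mu> - 2)) = \<mu> * (1 / (\<mu> - 2))"
      using assms(2) by (simp add: field_simps)
    moreover have "1 + 2 * (m / (\<mu>\<^sup>2 - 2*m)) = \<mu> * (\<mu> / (\<mu>\<^sup>2 - 2*m))"
      using m by (simp add: field_simps power2_eq_square)
    ultimately show ?thesis
      using H_quotient_charpoly_root[OF assms(2) m(2) assms(4)[folded m_def]]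
      unfolding w_def row by (simp add: class_weight_def)
  qed
  ultimately show ?thesis
    using assms(1) by (intro graph_rho_eq_positive_eigenvalue) auto
qed

lemma H'_edge_closed_contains_0:
  assumes "3*r + 4 \<le> n" "nbr_closed n (H'_edge n r) S" "S \<noteq> {}"
  shows "0 \<in> S"
proof -
  have step: "j \<in> S" if "i \<in> S" "j < n" "H'_edge n r i j" for i j
    using assms(2) that unfolding nbr_closed_def by blast
  have part3: "0 \<in> S" if "i \<in> S" "3*r < i" "i \<le> 3*r + 3" for i
  proof -
    have "i \<in> {3*r+1, 3*r+2, 3*r+3}"
      using that(2,3) by auto
    then have "H'_edge n r i 0"
      unfolding H'_edge_def bip_edge_def by auto
    then show ?thesis
      using step[of i 0, OF that(1)] assms(1) by simp
  qed
  obtain i where i: "i \<in> S" "i < n"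
    using assms(2,3) unfolding nbr_closed_def by auto
  consider "i = 0" | "1 \<le> i" "i \<le> 3*r" | "3*r < i" "i \<le> 3*r + 3" | "3*r + 3 < i"
    by linarith
  then show ?thesis
  proof cases
    case 2
    then show ?thesis
      using step[of i 0, OF i(1)] assms(1) unfolding H'_edge_def fan_edge_def by auto
  next
    case 4
    then have "3*r + 1 \<in> S"
      using step[of i "3*r+1", OF i(1)] i(2) assms(1) unfolding H'_edge_def bip_edge_def by auto
    then show ?thesis
      by (rule part3) auto
  qed (use i part3 in auto)
qed

definition H'_weight :: "nat \<Rightarrow> real \<Rightarrow> real \<Rightarrow> nat \<Rightarrow> real" where
  "H'_weight r m \<mu> = class_weight 3 r 1 (1 / (\<mu> - 2)) (\<mu> / (\<mu>\<^sup>2 - 3*m + 3)) (3 / (\<mu>\<^sup>2 - 3*m + 3))"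

lemma nbr_sum_H'_edge_H'_weight:
  assumes "3*r + 4 \<le> n" "m = real (n - 3*r - 3)"
    and "2 < \<mu>" "3*m < \<mu>\<^sup>2" "H_quotient_charpoly r m \<mu> = 0"
  defines "w \<equiv> H'_weight r m \<mu>"
  shows "\<And>i. i < n \<Longrightarrow> i \<noteq> 0 \<Longrightarrow> nbr_sum n (H'_edge n r) w i = \<mu> * w i"
    and "\<mu> * w 0 - nbr_sum n (H'_edge n r) w 0
      = \<mu> * (m - 3) * (\<mu>\<^sup>2 - 3*m) / ((\<mu>\<^sup>2 - 2*m) * (\<mu>\<^sup>2 - 3*m + 3))"
proof -
  have m: "0 \<le> m" "2*m < \<mu>\<^sup>2"
    using assms(2,4) by auto
  have D: "\<mu>\<^sup>2 - 2*m \<noteq> 0" "\<mu>\<^sup>2 - 3*m + 3 \<noteq> 0"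
    using m assms(4) by auto
  note row = nbr_sum_H'_edge[OF assms(1), folded assms(2)]
  show "nbr_sum n (H'_edge n r) w i = \<mu> * w i" if "i < n" "i \<noteq> 0" for i
  proof -
    have "1 + 2 * (1 / (\<mu> - 2)) = \<mu> * (1 / (\<mu> - 2))"
      using assms(3) by (simp add: field_simps)
    moreover have "1 + (m - 1) * (3 / (\<mu>\<^sup>2 - 3*m + 3)) = \<mu> * (\<mu> / (\<mu>\<^sup>2 - 3*m + 3))"
      using D(2) by (simp add: field_simps power2_eq_square)
    ultimately show ?thesis
      using that unfolding w_def H'_weight_def row[OF that(1)] by (simp add: class_weight_def)
  qed
  have "0 < n"
    using assms(1) by simp
  then have "\<mu> * w 0 - nbr_sum n (H'_edge n r) w 0
      = m * (\<mu> / (\<mu>\<^sup>2 - 2*m)) - 3 * (\<mu> / (\<mu>\<^sup>2 - 3*m + 3))"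
    using H_quotient_charpoly_root[OF assms(3) m(2) assms(5)]
    unfolding w_def H'_weight_def row[OF \<open>0 < n\<close>] by (simp add: class_weight_def)
  also have "\<dots> = \<mu> * (m - 3) * (\<mu>\<^sup>2 - 3*m) / ((\<mu>\<^sup>2 - 2*m) * (\<mu>\<^sup>2 - 3*m + 3))"
    using D by (simp add: field_simps)
  finally show "\<mu> * w 0 - nbr_sum n (H'_edge n r) w 0
      = \<mu> * (m - 3) * (\<mu>\<^sup>2 - 3*m) / ((\<mu>\<^sup>2 - 2*m) * (\<mu>\<^sup>2 - 3*m + 3))" .
qed

lemma graph_rho_H'_edge:
  assumes "3*r + 6 \<le> n" "2 < \<mu>"
    and "3 * real (n - 3*r - 3) < \<mu>\<^sup>2" "H_quotient_charpoly r (n - 3*r - 3) \<mu> = 0"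
  shows "graph_rho n (H'_edge n r) \<le> \<mu>"
    and "graph_rho n (H'_edge n r) = \<mu> \<longleftrightarrow> n = 3*r + 6"
proof -
  define m where "m = real (n - 3*r - 3)"
  define w where "w = H'_weight r m \<mu>"
  have m: "3 \<le> m" "3*m < \<mu>\<^sup>2" and m_eq: "m = 3 \<longleftrightarrow> n = 3*r + 6"
    using assms(1,3) by (auto simp: m_def)
  have n: "0 < n" "3*r + 4 \<le> n"
    using assms(1) by auto
  note rows = nbr_sum_H'_edge_H'_weight[OF n(2) m_def assms(2) m(2) assms(4)[folded m_def], folded w_def]
  have w_pos: "\<forall>i<n. 0 < w i"
    using assms(2) m by (simp add: w_def H'_weight_def class_weight_def)
  have denom: "0 < (\<mu>\<^sup>2 - 2*m) * (\<mu>\<^sup>2 - 3*m + 3)"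
    using m by simp
  have "nbr_sum n (H'_edge n r) w 0 \<le> \<mu> * w 0"
    using rows(2) denom assms(2) m by (smt (verit) divide_nonneg_pos mult_nonneg_nonneg)
  then have sub: "\<forall>i<n. nbr_sum n (H'_edge n r) w i \<le> \<mu> * w i"
    using rows(1) by (metis order_refl)
  show "graph_rho n (H'_edge n r) \<le> \<mu>"
    using graph_rho_le_subeigenvalue[OF n(1) w_pos sub] .
  show "graph_rho n (H'_edge n r) = \<mu> \<longleftrightarrow> n = 3*r + 6"
  proof (cases "m = 3")
    case True
    then have "\<forall>i<n. nbr_sum n (H'_edge n r) w i = \<mu> * w i"
      using rows by (metis diff_self mult_zero_right mult_zero_left div_0 eq_iff_diff_eq_0)
    then show ?thesis
      using graph_rho_eq_positive_eigenvalue[OF n(1) w_pos] True m_eq by simp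
  next
    case False
    then have "nbr_sum n (H'_edge n r) w 0 < \<mu> * w 0"
      using rows(2) denom assms(2) m by (smt (verit) divide_pos_pos mult_pos_pos)
    then have "graph_rho n (H'_edge n r) < \<mu>"
      using H'_edge_closed_contains_0[OF n(2)]
      by (intro graph_rho_less_subeigenvalue[OF n(1) w_pos sub]) auto
    then show ?thesis
      using False m_eq by simp
  qed
qed

theorem lemma4p2:
  fixes n r :: nat
  assumes "r \<ge> 1" and "n \<ge> 3*r + 6"
  shows "graph_rho n (H_edge n r) \<ge> graph_rho n (H'_edge n r) \<and>
         (graph_rho n (H_edge n r) = graph_rho n (H'_edge n r) \<longleftrightarrow> n = 3*r + 6)"
proof -
  define m where "m = real (n - 3*r - 3)"
  have "3 \<le> m"
    using assms(2) by (simp add: m_def)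
  with assms(1) obtain \<mu> where \<mu>: "2 < \<mu>" "3*m < \<mu>\<^sup>2" "H_quotient_charpoly r m \<mu> = 0"
    by (rule H_quotient_charpoly_root_exists)
  have "graph_rho n (H_edge n r) = \<mu>"
    using assms(2) \<mu> \<open>3 \<le> m\<close> by (intro graph_rho_H_edge) (auto simp: m_def)
  with graph_rho_H'_edge[OF assms(2) \<mu>[unfolded m_def]] show ?thesis
    by auto
qed

end
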